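(* There is an absolute constant $C$ such that for every $n$ and every matroid $M$ on ground set $[n]$ of rank $2$, $R^{lin}_{1/3}(rank_M)\le C$.
   Context: A matroid $M=([n],\mathcal I)$ has rank function $rank_M(S)=\max\{|I|: I\subseteq S, I\in\mathcal I\}$; we view it as a function on $\mathbb F_2^n$ by identifying $x$ with $\{i:x_i=1\}$. For $S\subseteq[n]$, $\chi_S(x)=\sum_{i\in S}x_i\pmod 2$. Exact randomized $\mathbb F_2$-sketch complexity: for $f\colon\mathbb F_2^n\to\mathbb R$ and $\delta\in[0,1]$, $R^{lin}_\delta(f)$ is the smallest integer $k$ such that there exists a probability distribution over $k$-tuples of subsets $\mathbf S_1,\dots,\mathbf S_k\subseteq[n]$ and a function $g\colon\mathbb F_2^k\to\mathbb R$ with $\Pr_{\mathbf S_1,\dots,\mathbf S_k}[g(\chi_{\mathbf S_1}(x),\dots,\chi_{\mathbf S_k}(x))=f(x)]\ge1-\delta$ for every $x\in\mathbb F_2^n$. *)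

theory Defs
  imports "HOL-Probability.Probability"
begin

definition matroid :: "nat \<Rightarrow> nat set set \<Rightarrow> bool" where
  "matroid n \<I> \<longleftrightarrow>
     (\<forall>I\<in>\<I>. I \<subseteq> {1..n}) \<and>
     {} \<in> \<I> \<and>
     (\<forall>I J. J \<in> \<I> \<longrightarrow> I \<subseteq> J \<longrightarrow> I \<in> \<I>) \<and>
     (\<forall>I J. I \<in> \<I> \<longrightarrow> J \<in> \<I> \<longrightarrow> card I < card J \<longrightarrow>
        (\<exists>x\<in>J - I. insert x I \<in> \<I>))"

text \<open>Rank function: rank(S) = max{|I| : I \<subseteq> S, I independent}.
  A vector x in F_2^n is identified with the set {i : x_i = 1} \<subseteq> [n].\<close>
definition mrank :: "nat set set \<Rightarrow> nat set \<Rightarrow> nat" where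
  "mrank \<I> S = Max (card ` {I \<in> \<I>. I \<subseteq> S})"

text \<open>Parity chi_S(x) = sum_{i in S} x_i mod 2 (True = 1), with x identified with X.\<close>
definition chi :: "nat set \<Rightarrow> nat set \<Rightarrow> bool" where
  "chi S X = odd (card (S \<inter> X))"

definition has_sketch :: "nat \<Rightarrow> real \<Rightarrow> (nat set \<Rightarrow> real) \<Rightarrow> nat \<Rightarrow> bool" where
  "has_sketch n \<delta> f k \<longleftrightarrow>
     (\<exists>(D :: nat set list pmf) (g :: bool list \<Rightarrow> real).
        (\<forall>Ss\<in>set_pmf D. length Ss = k \<and> (\<forall>S\<in>set Ss. S \<subseteq> {1..n})) \<and>
        (\<forall>X. X \<subseteq> {1..n} \<longrightarrow>
           measure_pmf.prob D {Ss. g (map (\<lambda>S. chi S X) Ss) = f X} \<ge> 1 - \<delta>))"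

definition sketch_complexity :: "nat \<Rightarrow> real \<Rightarrow> (nat set \<Rightarrow> real) \<Rightarrow> nat" where
  "sketch_complexity n \<delta> f = (LEAST k. has_sketch n \<delta> f k)"

end

theory Submission
  imports Defs
begin

(* In a matroid of rank at most 2, rank X is 0, 1 or 2 according as X contains no non-loop,
   a non-loop but no two non-parallel elements, or two non-parallel elements.
   One trial draws T, S \<subseteq> [n] uniformly; T 2-colours the parallel classes of non-loops
   (through their least elements) and the trial measures the parities of S \<inter> X on the two
   colour classes, which are two parities chi of X.  For rank 1 the non-loops of X have one
   colour, so the parities are never both odd, while one of them is odd with probability 1/2.
   For rank 2, T separates two non-parallel elements of X with probability 1/2, and then
   both parities are odd with probability 1/4.  Answering 2 if some trial has both parities
   odd, 1 if some parity is odd and 0 otherwise, 9 trials (18 parities) err with probability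
   at most (7/8)^9 < 1/3. *)

lemma card_half_by_involution:
  assumes "finite A" and "\<And>x. x \<in> A \<Longrightarrow> f x \<in> A" and "\<And>x. x \<in> A \<Longrightarrow> f (f x) = x"
    and "\<And>x. x \<in> A \<Longrightarrow> P (f x) \<longleftrightarrow> \<not> P x"
  shows "2 * card {x \<in> A. P x} = card A"
proof -
  have "bij_betw f {x \<in> A. P x} {x \<in> A. \<not> P x}"
    by (rule bij_betw_byWitness[where f' = f]) (use assms in auto)
  then have "card {x \<in> A. P x} = card {x \<in> A. \<not> P x}"
    by (rule bij_betw_same_card)
  moreover have "A = {x \<in> A. P x} \<union> {x \<in> A. \<not> P x}" by blast
  then have "card A = card {x \<in> A. P x} + card {x \<in> A. \<not> P x}"
    using \<open>finite A\<close> by (metis (no_types, lifting) card_Un_disjoint disjoint_iff finite_Un mem_Collect_eq)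
  ultimately show ?thesis by simp
qed

lemma odd_card_sym_diff_singleton_Int:
  assumes "finite A" and "x \<in> A"
  shows "odd (card (sym_diff S {x} \<inter> A)) \<longleftrightarrow> \<not> odd (card (S \<inter> A))"
proof (cases "x \<in> S")
  case True
  then have "sym_diff S {x} \<inter> A = S \<inter> A - {x}" by auto
  moreover have "card (S \<inter> A) = Suc (card (S \<inter> A - {x}))"
    using True assms by (intro card_Suc_Diff1 [symmetric]) auto
  ultimately show ?thesis by simp
next
  case False
  then have "sym_diff S {x} \<inter> A = insert x (S \<inter> A)" using assms by auto
  then show ?thesis using False assms by simp
qed

lemma card_Pow_odd_Int_half:
  assumes "finite U" and "A \<subseteq> U" and "x \<in> A"
    and Q: "\<And>S. S \<subseteq> U \<Longrightarrow> Q (sym_diff S {x}) \<longleftrightarrow> Q S"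
  shows "2 * card {S \<in> Pow U. Q S \<and> odd (card (S \<inter> A))} = card {S \<in> Pow U. Q S}"
proof -
  have "finite A" using assms finite_subset by blast
  have "2 * card {S \<in> {S \<in> Pow U. Q S}. odd (card (S \<inter> A))} = card {S \<in> Pow U. Q S}"
    by (rule card_half_by_involution[where f = "\<lambda>S. sym_diff S {x}"])
      (use assms \<open>finite A\<close> in \<open>auto simp: odd_card_sym_diff_singleton_Int\<close>)
  moreover have "{S \<in> {S \<in> Pow U. Q S}. odd (card (S \<inter> A))} = {S \<in> Pow U. Q S \<and> odd (card (S \<inter> A))}"
    by blast
  ultimately show ?thesis by simp
qed

corollary card_Pow_odd_Int:
  assumes "finite U" and "A \<subseteq> U" and "A \<noteq> {}"
  shows "2 * card {S \<in> Pow U. odd (card (S \<inter> A))} = card (Pow U)"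
proof -
  obtain x where "x \<in> A" using assms by blast
  with assms card_Pow_odd_Int_half[of U A x "\<lambda>_. True"] show ?thesis by (simp add: Pow_def)
qed

corollary card_Pow_odd_Int_odd_Int:
  assumes "finite U" and "A \<subseteq> U" and "B \<subseteq> U" and "A \<inter> B = {}" and "A \<noteq> {}" and "B \<noteq> {}"
  shows "4 * card {S \<in> Pow U. odd (card (S \<inter> A)) \<and> odd (card (S \<inter> B))} = card (Pow U)"
proof -
  obtain a where a: "a \<in> A" using assms by blast
  then have B_invariant: "sym_diff S {a} \<inter> B = S \<inter> B" for S using assms by blast
  have "2 * card {S \<in> Pow U. odd (card (S \<inter> B)) \<and> odd (card (S \<inter> A))} =
        card {S \<in> Pow U. odd (card (S \<inter> B))}"
    by (rule card_Pow_odd_Int_half) (use assms a B_invariant in auto)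
  with card_Pow_odd_Int[of U B] assms show ?thesis by (simp add: conj_commute)
qed

lemma measure_pmf_of_set_PiE_some_trial:
  fixes W :: "'a set" and k :: nat
  defines "\<Omega> \<equiv> PiE {..<k} (\<lambda>_. W)"
  assumes "finite W" and "W \<noteq> {}" and "G \<subseteq> W"
    and E: "\<And>\<sigma>. \<sigma> \<in> \<Omega> \<Longrightarrow> \<exists>i<k. \<sigma> i \<in> G \<Longrightarrow> \<sigma> \<in> E"
  shows "1 - (real (card (W - G)) / card W) ^ k \<le> measure_pmf.prob (pmf_of_set \<Omega>) E"
proof -
  have "finite \<Omega>" "\<Omega> \<noteq> {}"
    using assms by (simp_all add: finite_PiE PiE_eq_empty_iff)
  have "\<Omega> - E \<subseteq> PiE {..<k} (\<lambda>_. W - G)"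
    using E unfolding \<Omega>_def by (force simp: PiE_iff)
  then have "card (\<Omega> - E) \<le> card (W - G) ^ k"
    using card_mono[of "PiE {..<k} (\<lambda>_. W - G)"] \<open>finite W\<close> by (simp add: finite_PiE card_PiE)
  moreover have "card \<Omega> = card (\<Omega> \<inter> E) + card (\<Omega> - E)"
    using \<open>finite \<Omega>\<close> by (metis card_Int_Diff)
  moreover have "card \<Omega> = card W ^ k"
    unfolding \<Omega>_def by (simp add: card_PiE)
  ultimately have "real (card W ^ k) - card (W - G) ^ k \<le> card (\<Omega> \<inter> E)"
    by linarith
  moreover have "real (card W ^ k) > 0"
    using \<open>finite W\<close> \<open>W \<noteq> {}\<close> by (simp add: card_gt_0_iff)
  ultimately have "1 - card (W - G) ^ k / real (card W ^ k) \<le> card (\<Omega> \<inter> E) / real (card W ^ k)"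
    by (metis diff_divide_distrib divide_right_mono divide_self less_le)
  then show ?thesis
    using measure_pmf_of_set[OF \<open>\<Omega> \<noteq> {}\<close> \<open>finite \<Omega>\<close>] \<open>card \<Omega> = card W ^ k\<close>
    by (simp add: power_divide)
qed

definition decode :: "nat \<Rightarrow> bool list \<Rightarrow> real" where
  "decode k bs = (if \<exists>i<k. bs ! i \<and> bs ! (k + i) then 2 else if True \<in> set bs then 1 else 0)"

lemma decode_map_append:
  "decode k (map f [0..<k] @ map g [0..<k]) =
     (if \<exists>i<k. f i \<and> g i then 2 else if \<exists>i<k. f i \<or> g i then 1 else 0)"
  by (auto simp: decode_def nth_append)

locale matroid_on =
  fixes n :: nat and \<I> :: "nat set set"
  assumes matroid: "matroid n \<I>"
begin

lemma indep_subset_ground: "J \<in> \<I> \<Longrightarrow> J \<subseteq> {1..n}"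
  and indep_subset: "J \<in> \<I> \<Longrightarrow> K \<subseteq> J \<Longrightarrow> K \<in> \<I>"
  and empty_indep: "{} \<in> \<I>"
  and indep_augment: "J \<in> \<I> \<Longrightarrow> K \<in> \<I> \<Longrightarrow> card J < card K \<Longrightarrow> \<exists>x\<in>K - J. insert x J \<in> \<I>"
  using matroid unfolding matroid_def by blast+

definition nonloops :: "nat set" where
  "nonloops = {e \<in> {1..n}. {e} \<in> \<I>}"

definition parallel :: "nat \<Rightarrow> nat \<Rightarrow> bool" where
  "parallel e f \<longleftrightarrow> e = f \<or> {e, f} \<notin> \<I>"

definition parallel_rep :: "nat \<Rightarrow> nat" where
  "parallel_rep e = Min {f \<in> nonloops. parallel e f}"

lemma parallel_sym: "parallel e f \<Longrightarrow> parallel f e"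
  unfolding parallel_def by (auto simp: insert_commute)

lemma parallel_trans:
  assumes "f \<in> nonloops" and "parallel e f" and "parallel f g"
  shows "parallel e g"
proof (rule ccontr)
  assume "\<not> parallel e g"
  then have "{e, g} \<in> \<I>" and "e \<noteq> g" unfolding parallel_def by auto
  moreover have "{f} \<in> \<I>" using assms(1) unfolding nonloops_def by auto
  ultimately obtain x where "x \<in> {e, g} - {f}" and "insert x {f} \<in> \<I>"
    using indep_augment[of "{f}" "{e, g}"] by auto
  then show False
    using assms(2,3) unfolding parallel_def by (auto simp: insert_commute)
qed

lemma parallel_rep:
  assumes "e \<in> nonloops"
  shows "parallel_rep e \<in> nonloops" and "parallel e (parallel_rep e)"
proof -
  have "finite {f \<in> nonloops. parallel e f}" unfolding nonloops_def by auto
  moreover have "e \<in> {f \<in> nonloops. parallel e f}" using assms unfolding parallel_def by auto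
  ultimately have "parallel_rep e \<in> {f \<in> nonloops. parallel e f}"
    unfolding parallel_rep_def by (metis Min_in empty_iff)
  then show "parallel_rep e \<in> nonloops" and "parallel e (parallel_rep e)" by auto
qed

lemma parallel_rep_eq_iff:
  assumes "e \<in> nonloops" and "f \<in> nonloops"
  shows "parallel_rep e = parallel_rep f \<longleftrightarrow> parallel e f"
proof
  assume "parallel_rep e = parallel_rep f"
  then show "parallel e f"
    using parallel_rep[OF assms(1)] parallel_rep[OF assms(2)] parallel_trans parallel_sym by metis
next
  assume "parallel e f"
  then have "{g \<in> nonloops. parallel e g} = {g \<in> nonloops. parallel f g}"
    using parallel_trans parallel_sym assms by blast
  then show "parallel_rep e = parallel_rep f" unfolding parallel_rep_def by simp
qed

lemma indep_subset_nonloops: "J \<in> \<I> \<Longrightarrow> J \<subseteq> nonloops"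
  using indep_subset indep_subset_ground unfolding nonloops_def by blast

lemma finite_indep_subsets: "finite {J \<in> \<I>. J \<subseteq> X}"
  by (rule finite_subset[of _ "Pow {1..n}"]) (use indep_subset_ground in auto)

lemma card_le_mrank: "J \<in> \<I> \<Longrightarrow> J \<subseteq> X \<Longrightarrow> card J \<le> mrank \<I> X"
  unfolding mrank_def by (rule Max_ge) (use finite_indep_subsets in auto)

lemma mrank_le: "(\<And>J. J \<in> \<I> \<Longrightarrow> J \<subseteq> X \<Longrightarrow> card J \<le> r) \<Longrightarrow> mrank \<I> X \<le> r"
  unfolding mrank_def by (subst Max_le_iff) (use finite_indep_subsets empty_indep in auto)

lemma mrank_eq_0:
  assumes "X \<inter> nonloops = {}"
  shows "mrank \<I> X = 0"
proof -
  have "J = {}" if "J \<in> \<I>" and "J \<subseteq> X" for J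
    using that assms indep_subset_nonloops by blast
  then show ?thesis using mrank_le[of X 0] by fastforce
qed

lemma mrank_eq_1:
  assumes "e \<in> X \<inter> nonloops"
    and "\<And>a b. a \<in> X \<inter> nonloops \<Longrightarrow> b \<in> X \<inter> nonloops \<Longrightarrow> parallel a b"
  shows "mrank \<I> X = 1"
proof (rule antisym)
  show "mrank \<I> X \<le> 1"
  proof (rule mrank_le)
    fix J assume J: "J \<in> \<I>" "J \<subseteq> X"
    show "card J \<le> 1"
    proof (rule ccontr)
      assume "\<not> card J \<le> 1"
      then obtain a b where ab: "a \<in> J" "b \<in> J" "a \<noteq> b"
        using card_le_Suc0_iff_eq[of J] finite_subset[OF indep_subset_ground[OF J(1)]] by auto
      then have "{a, b} \<in> \<I>" using indep_subset[OF J(1)] by auto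
      moreover have "parallel a b" using assms(2) ab J indep_subset_nonloops by blast
      ultimately show False using ab unfolding parallel_def by auto
    qed
  qed
  have "{e} \<in> \<I>" using assms(1) unfolding nonloops_def by auto
  then show "1 \<le> mrank \<I> X" using card_le_mrank[of "{e}" X] assms(1) by auto
qed

lemma mrank_eq_2:
  assumes "mrank \<I> {1..n} \<le> 2" and "X \<subseteq> {1..n}"
    and "a \<in> X" and "b \<in> X" and "\<not> parallel a b"
  shows "mrank \<I> X = 2"
proof (rule antisym)
  show "mrank \<I> X \<le> 2"
    using mrank_le card_le_mrank[of _ "{1..n}"] assms(1,2) by (meson order.trans)
  have "{a, b} \<in> \<I>" and "a \<noteq> b" using assms(5) unfolding parallel_def by auto
  then show "2 \<le> mrank \<I> X" using card_le_mrank[of "{a, b}" X] assms(3,4) by auto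
qed

definition side :: "nat set \<Rightarrow> bool \<Rightarrow> nat set" where
  "side T b = {e \<in> nonloops. (parallel_rep e \<in> T) = b}"

definition trial_bit :: "nat set \<Rightarrow> nat set \<times> nat set \<Rightarrow> bool \<Rightarrow> bool" where
  "trial_bit X p b = chi (snd p \<inter> side (fst p) b) X"

definition sketch :: "nat \<Rightarrow> (nat \<Rightarrow> nat set \<times> nat set) \<Rightarrow> nat set list" where
  "sketch k \<sigma> = map (\<lambda>i. snd (\<sigma> i) \<inter> side (fst (\<sigma> i)) False) [0..<k] @
                  map (\<lambda>i. snd (\<sigma> i) \<inter> side (fst (\<sigma> i)) True) [0..<k]"

abbreviation trials :: "(nat set \<times> nat set) set" where
  "trials \<equiv> Pow {1..n} \<times> Pow {1..n}"

lemma trial_bit_iff: "trial_bit X (T, S) b \<longleftrightarrow> odd (card (S \<inter> (side T b \<inter> X)))"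
  by (simp add: trial_bit_def chi_def Int_assoc)

lemma decode_sketch:
  "decode k (map (\<lambda>S. chi S X) (sketch k \<sigma>)) =
     (if \<exists>i<k. trial_bit X (\<sigma> i) False \<and> trial_bit X (\<sigma> i) True then 2
      else if \<exists>i<k. trial_bit X (\<sigma> i) False \<or> trial_bit X (\<sigma> i) True then 1 else 0)"
  unfolding sketch_def trial_bit_def by (simp add: decode_map_append comp_def)

lemma not_trial_bit:
  assumes "X \<inter> nonloops = {}"
  shows "\<not> trial_bit X p b"
proof -
  have "side (fst p) b \<inter> X = {}" using assms unfolding side_def by auto
  then show ?thesis by (simp add: trial_bit_def chi_def Int_assoc)
qed

lemma not_both_trial_bits:
  assumes "\<And>a b. a \<in> X \<inter> nonloops \<Longrightarrow> b \<in> X \<inter> nonloops \<Longrightarrow> parallel a b"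
  shows "\<not> (trial_bit X p False \<and> trial_bit X p True)"
proof
  obtain T S where p: "p = (T, S)" by fastforce
  assume "trial_bit X p False \<and> trial_bit X p True"
  then have "side T False \<inter> X \<noteq> {}" and "side T True \<inter> X \<noteq> {}"
    unfolding p trial_bit_iff by (metis Int_empty_right card.empty even_zero)+
  then obtain x y where "x \<in> side T False \<inter> X" and "y \<in> side T True \<inter> X" by blast
  moreover from this have "parallel_rep x = parallel_rep y"
    using assms parallel_rep_eq_iff unfolding side_def by auto
  ultimately show False unfolding side_def by auto
qed

lemma card_trials_some_bit:
  assumes "X \<inter> nonloops \<noteq> {}"
  shows "card trials \<le> 2 * card {p \<in> trials. trial_bit X p False \<or> trial_bit X p True}"
proof -
  let ?odd = "{S \<in> Pow {1..n}. odd (card (S \<inter> (X \<inter> nonloops)))}"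
  have "side T False \<inter> X \<union> side T True \<inter> X = X \<inter> nonloops"
    and "(side T False \<inter> X) \<inter> (side T True \<inter> X) = {}" for T
    unfolding side_def by auto
  then have "odd (card (S \<inter> (X \<inter> nonloops))) \<Longrightarrow> trial_bit X (T, S) False \<or> trial_bit X (T, S) True"
    if "S \<subseteq> {1..n}" for T S
    using that card_Un_disjoint[of "S \<inter> (side T False \<inter> X)" "S \<inter> (side T True \<inter> X)"]
    by (fastforce simp: trial_bit_iff finite_subset Int_Un_distrib[symmetric])
  then have "Pow {1..n} \<times> ?odd \<subseteq> {p \<in> trials. trial_bit X p False \<or> trial_bit X p True}"
    by auto
  then have "card (Pow {1..n} \<times> ?odd) \<le> card {p \<in> trials. trial_bit X p False \<or> trial_bit X p True}"
    by (rule card_mono[rotated]) auto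
  moreover have "2 * card ?odd = card (Pow {1..n})"
    by (rule card_Pow_odd_Int) (use assms nonloops_def in auto)
  then have "card trials = 2 * card (Pow {1..n} \<times> ?odd)"
    by (simp add: card_cartesian_product)
  ultimately show ?thesis by linarith
qed

lemma card_trials_both_bits:
  assumes a: "a \<in> X \<inter> nonloops" and b: "b \<in> X \<inter> nonloops" and "\<not> parallel a b"
  shows "card trials \<le> 8 * card {p \<in> trials. trial_bit X p False \<and> trial_bit X p True}"
proof -
  define ra rb where "ra = parallel_rep a" and "rb = parallel_rep b"
  have "ra \<noteq> rb" using parallel_rep_eq_iff assms unfolding ra_def rb_def by auto
  have "{ra, rb} \<subseteq> {1..n}" using parallel_rep(1) a b unfolding ra_def rb_def nonloops_def by auto
  let ?Ts = "{T \<in> Pow {1..n}. odd (card (T \<inter> {ra, rb}))}"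
  let ?Ss = "\<lambda>T. {S \<in> Pow {1..n}. odd (card (S \<inter> (side T False \<inter> X))) \<and>
                                 odd (card (S \<inter> (side T True \<inter> X)))}"
  have Ts: "2 * card ?Ts = card (Pow {1..n})"
    by (rule card_Pow_odd_Int) (use \<open>{ra, rb} \<subseteq> {1..n}\<close> in auto)
  have Ss: "4 * card (?Ss T) = card (Pow {1..n})" if "T \<in> ?Ts" for T
  proof (rule card_Pow_odd_Int_odd_Int)
    have "(ra \<in> T) \<noteq> (rb \<in> T)"
      using that \<open>ra \<noteq> rb\<close> by (cases "ra \<in> T"; cases "rb \<in> T") (auto simp: Int_insert_left)
    moreover have "a \<in> side T (ra \<in> T) \<inter> X" and "b \<in> side T (rb \<in> T) \<inter> X"
      using a b unfolding side_def ra_def rb_def by auto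
    ultimately show "side T False \<inter> X \<noteq> {}" and "side T True \<inter> X \<noteq> {}"
      by (metis empty_iff)+
  qed (auto simp: side_def nonloops_def)
  have "Sigma ?Ts ?Ss \<subseteq> {p \<in> trials. trial_bit X p False \<and> trial_bit X p True}"
    by (auto simp: trial_bit_iff)
  then have "card (Sigma ?Ts ?Ss) \<le> card {p \<in> trials. trial_bit X p False \<and> trial_bit X p True}"
    by (rule card_mono[rotated]) auto
  moreover have "4 * card (Sigma ?Ts ?Ss) = card ?Ts * card (Pow {1..n})"
    using Ss by (simp add: card_SigmaI sum_distrib_left)
  moreover have "card trials = 2 * card ?Ts * card (Pow {1..n})"
    using Ts by (simp add: card_cartesian_product)
  ultimately show ?thesis by linarith
qed

lemma exists_success_trials:
  assumes "mrank \<I> {1..n} \<le> 2" and "X \<subseteq> {1..n}"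
  obtains G where "G \<subseteq> trials" and "card trials \<le> 8 * card G"
    and "\<And>\<sigma>. \<exists>i<k. \<sigma> i \<in> G \<Longrightarrow> decode k (map (\<lambda>S. chi S X) (sketch k \<sigma>)) = mrank \<I> X"
proof (cases "X \<inter> nonloops = {}")
  case True
  show ?thesis
    by (rule that[of trials]) (use True in \<open>simp_all add: decode_sketch not_trial_bit mrank_eq_0\<close>)
next
  case False
  then obtain e where e: "e \<in> X \<inter> nonloops" by blast
  show ?thesis
  proof (cases "\<forall>a\<in>X \<inter> nonloops. \<forall>b\<in>X \<inter> nonloops. parallel a b")
    case True
    let ?G = "{p \<in> trials. trial_bit X p False \<or> trial_bit X p True}"
    show ?thesis
    proof (rule that[of ?G])
      show "card trials \<le> 8 * card ?G" using card_trials_some_bit[OF False] by linarith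
      show "decode k (map (\<lambda>S. chi S X) (sketch k \<sigma>)) = mrank \<I> X" if "\<exists>i<k. \<sigma> i \<in> ?G" for \<sigma>
        using that True not_both_trial_bits[of X] mrank_eq_1[OF e] by (auto simp: decode_sketch)
    qed auto
  next
    case False
    then obtain a b where ab: "a \<in> X \<inter> nonloops" "b \<in> X \<inter> nonloops" "\<not> parallel a b" by blast
    let ?G = "{p \<in> trials. trial_bit X p False \<and> trial_bit X p True}"
    show ?thesis
    proof (rule that[of ?G])
      show "card trials \<le> 8 * card ?G" using card_trials_both_bits[OF ab] .
      show "decode k (map (\<lambda>S. chi S X) (sketch k \<sigma>)) = mrank \<I> X" if "\<exists>i<k. \<sigma> i \<in> ?G" for \<sigma>
        using that ab mrank_eq_2[OF assms, of a b] by (auto simp: decode_sketch)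
    qed auto
  qed
qed

lemma has_sketch_rank_le_2:
  assumes "mrank \<I> {1..n} \<le> 2"
  shows "has_sketch n (1/3) (\<lambda>X. real (mrank \<I> X)) 18"
proof -
  define \<Omega> where "\<Omega> = PiE {..<9::nat} (\<lambda>_. trials)"
  define D where "D = map_pmf (sketch 9) (pmf_of_set \<Omega>)"
  have "finite \<Omega>" and "\<Omega> \<noteq> {}"
    unfolding \<Omega>_def by (auto simp: finite_PiE PiE_eq_empty_iff)
  have "length Ss = 18 \<and> (\<forall>S\<in>set Ss. S \<subseteq> {1..n})" if "Ss \<in> set_pmf D" for Ss
    using that \<open>finite \<Omega>\<close> \<open>\<Omega> \<noteq> {}\<close>
    by (auto simp: D_def sketch_def side_def nonloops_def)
  moreover have "1 - 1/3 \<le> measure_pmf.prob D {Ss. decode 9 (map (\<lambda>S. chi S X) Ss) = mrank \<I> X}"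
    if X: "X \<subseteq> {1..n}" for X
  proof -
    obtain G where G: "G \<subseteq> trials" "card trials \<le> 8 * card G"
      and success: "\<And>\<sigma>. \<exists>i<9. \<sigma> i \<in> G \<Longrightarrow> decode 9 (map (\<lambda>S. chi S X) (sketch 9 \<sigma>)) = mrank \<I> X"
      using exists_success_trials[OF assms X] by blast
    have "card (trials - G) = card trials - card G"
      using G(1) by (simp add: card_Diff_subset finite_subset)
    with G(2) have "8 * card (trials - G) \<le> 7 * card trials" by linarith
    then have "8 * real (card (trials - G)) \<le> 7 * real (card trials)" by linarith
    moreover have "card trials > 0" by (auto simp: card_gt_0_iff)
    ultimately have "real (card (trials - G)) / card trials \<le> 7/8"
      by (simp only: pos_divide_le_eq of_nat_0_less_iff)
    then have "(real (card (trials - G)) / card trials) ^ 9 \<le> (7/8) ^ 9"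
      by (rule power_mono) simp
    moreover have "1 - (real (card (trials - G)) / card trials) ^ 9 \<le>
        measure_pmf.prob (pmf_of_set \<Omega>) (sketch 9 -` {Ss. decode 9 (map (\<lambda>S. chi S X) Ss) = mrank \<I> X})"
      unfolding \<Omega>_def by (rule measure_pmf_of_set_PiE_some_trial) (use G success in auto)
    moreover have "(7/8 :: real) ^ 9 \<le> 1/3" by (simp add: power_divide)
    ultimately show ?thesis unfolding D_def measure_map_pmf by linarith
  qed
  ultimately show ?thesis unfolding has_sketch_def by blast
qed

end

theorem theorem1:
  shows "\<exists>C::nat. \<forall>n::nat. \<forall>\<I>::nat set set.
           matroid n \<I> \<and> mrank \<I> {1..n} = 2 \<longrightarrow>
           sketch_complexity n (1/3) (\<lambda>X. real (mrank \<I> X)) \<le> C"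
proof (intro exI allI impI)
  fix n \<I> assume "matroid n \<I> \<and> mrank \<I> {1..n} = 2"
  then have "has_sketch n (1/3) (\<lambda>X. real (mrank \<I> X)) 18"
    using matroid_on.has_sketch_rank_le_2[of n \<I>] matroid_on.intro by simp
  then show "sketch_complexity n (1/3) (\<lambda>X. real (mrank \<I> X)) \<le> 18"
    unfolding sketch_complexity_def by (rule Least_le)
qed

end
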